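(* Let $\Omega\subset\mathbb{R}^2$ be an open, smooth, bounded and uniformly convex domain, $\varphi,\psi\in C^\infty(\overline\Omega)$ with $\inf_{\partial\Omega}\psi>0$, and let $u\in C^\infty(\overline\Omega)$ be a uniformly convex solution of $$\sum_{i,j=1}^2U^{ij}w_{ij}=-|Du|^2\Delta u-2\sum_{i,j=1}^2u_iu_ju_{ij}\ \text{in }\Omega,\quad w=(\det D^2u)^{-1}\ \text{in }\Omega,\quad u=\varphi,\ w=\psi\ \text{on }\partial\Omega,$$ with $(U^{ij})=(\det D^2u)(D^2u)^{-1}$. Then there is a constant $C>1$ depending only on $\Omega$, $\varphi$, $\psi$ (through $\inf_{\partial\Omega}\psi$ and bounds on $\psi$) such that $\sup_\Omega|Du|\le C$ and $$C^{-1}\le\det D^2u\le C\quad\text{in }\Omega.$$ *)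

theory Defs
  imports "HOL-Analysis.Analysis"
begin

type_synonym pt = "real ^ 2"

definition pd :: "2 \<Rightarrow> (pt \<Rightarrow> real) \<Rightarrow> pt \<Rightarrow> real" where
  "pd i f x = frechet_derivative f (at x) (axis i 1)"

fun iter_pd :: "2 list \<Rightarrow> (pt \<Rightarrow> real) \<Rightarrow> pt \<Rightarrow> real" where
  "iter_pd [] f = f"
| "iter_pd (i # is) f = pd i (iter_pd is f)"

definition smooth_on :: "pt set \<Rightarrow> (pt \<Rightarrow> real) \<Rightarrow> bool" where
  "smooth_on S f \<longleftrightarrow> (\<forall>is. iter_pd is f differentiable_on S)"

definition smooth_upto :: "pt set \<Rightarrow> (pt \<Rightarrow> real) \<Rightarrow> bool" where
  "smooth_upto \<Omega> f \<longleftrightarrow> (\<exists>F. smooth_on UNIV F \<and> (\<forall>x\<in>closure \<Omega>. F x = f x))"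

definition grad :: "(pt \<Rightarrow> real) \<Rightarrow> pt \<Rightarrow> pt" where
  "grad f x = (\<chi> i. pd i f x)"

definition hess :: "(pt \<Rightarrow> real) \<Rightarrow> pt \<Rightarrow> real^2^2" where
  "hess f x = (\<chi> i j. pd i (pd j f) x)"

definition lap :: "(pt \<Rightarrow> real) \<Rightarrow> pt \<Rightarrow> real" where
  "lap f x = (\<Sum>i\<in>UNIV. pd i (pd i f) x)"

definition unif_pos_def_on :: "pt set \<Rightarrow> (pt \<Rightarrow> real^2^2) \<Rightarrow> bool" where
  "unif_pos_def_on S H \<longleftrightarrow> (\<exists>c>0. \<forall>x\<in>S. \<forall>\<xi>::pt. \<xi> \<bullet> (H x *v \<xi>) \<ge> c * (norm \<xi>)\<^sup>2)"

definition smooth_unif_convex_domain :: "pt set \<Rightarrow> bool" where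
  "smooth_unif_convex_domain \<Omega> \<longleftrightarrow>
     (\<exists>\<rho>. smooth_on UNIV \<rho> \<and> \<Omega> = {x. \<rho> x < 0} \<and>
          (\<forall>x. \<rho> x = 0 \<longrightarrow> grad \<rho> x \<noteq> 0) \<and>
          unif_pos_def_on (closure \<Omega>) (hess \<rho>))"

definition is_solution ::
  "pt set \<Rightarrow> (pt \<Rightarrow> real) \<Rightarrow> (pt \<Rightarrow> real) \<Rightarrow> (pt \<Rightarrow> real) \<Rightarrow> (pt \<Rightarrow> real) \<Rightarrow> bool" where
  "is_solution \<Omega> \<phi> \<psi> u w \<longleftrightarrow>
     smooth_upto \<Omega> u \<and> unif_pos_def_on \<Omega> (hess u) \<and>
     continuous_on (closure \<Omega>) w \<and>
     (\<forall>x\<in>\<Omega>. w x = 1 / det (hess u x)) \<and>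
     (\<forall>x\<in>\<Omega>. (let U = det (hess u x) *\<^sub>R matrix_inv (hess u x) in
         (\<Sum>i\<in>UNIV. \<Sum>j\<in>UNIV. U $ i $ j * pd i (pd j w) x))
        = - (norm (grad u x))\<^sup>2 * lap u x
          - 2 * (\<Sum>i\<in>UNIV. \<Sum>j\<in>UNIV. grad u x $ i * grad u x $ j * pd i (pd j u) x)) \<and>
     (\<forall>x\<in>frontier \<Omega>. u x = \<phi> x) \<and>
     (\<forall>x\<in>frontier \<Omega>. w x = \<psi> x)"

end

theory Submission
  imports Defs
begin

text \<open>
  Write \<open>w = (det D\<^sup>2u)\<^sup>-\<^sup>1\<close> and \<open>L = U\<^sup>i\<^sup>j \<partial>\<^sub>i\<^sub>j\<close> for the linearised operator. The right-hand
  side \<open>f = -|Du|\<^sup>2 \<Delta>u - 2 Du\<^sup>T D\<^sup>2u Du\<close> satisfies \<open>-3 |Du|\<^sup>2 \<Delta>u \<le> f \<le> 0\<close> by convexity,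
  and \<open>L |x|\<^sup>2 = 2 \<Delta>u > 0\<close>. Hence \<open>w - \<epsilon> |x|\<^sup>2\<close> has no interior minimum, and the boundary
  values \<open>w = \<psi> \<ge> min \<psi>\<close> bound \<open>w\<close> from below, i.e. \<open>det D\<^sup>2u\<close> from above.
  With \<open>\<rho>\<close> a uniformly convex defining function of \<open>\<Omega>\<close>, the barrier \<open>\<phi> + K \<rho>\<close> has
  \<open>det D\<^sup>2(\<phi> + K \<rho>) > det D\<^sup>2u\<close> for large \<open>K\<close>, so by comparison \<open>u \<ge> \<phi> + K \<rho>\<close>
  with equality on \<open>\<partial>\<Omega>\<close>; following \<open>u\<close> along the ray in the direction of \<open>Du\<close>
  to the boundary, convexity bounds \<open>|Du|\<close> by the gradient of the barrier.
  Finally, once \<open>|Du| \<le> L\<close>, the function \<open>w + A |x|\<^sup>2\<close> with \<open>2A > 3L\<^sup>2\<close> has no interior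
  maximum, which bounds \<open>w\<close> from above and \<open>det D\<^sup>2u\<close> from below.
\<close>

section \<open>Partial derivatives\<close>

lemma pd_cong:
  assumes "open S" "x \<in> S" "\<And>y. y \<in> S \<Longrightarrow> f y = g y"
  shows "pd i f x = pd i g x"
proof -
  have "(f has_derivative D) (at x) \<longleftrightarrow> (g has_derivative D) (at x)" for D
    using has_derivative_transform_within_open[OF _ assms(1,2)] assms(3) by metis
  then show ?thesis unfolding pd_def frechet_derivative_def by simp
qed

lemma differentiable_at_cong:
  assumes "open S" "x \<in> S" "\<And>y. y \<in> S \<Longrightarrow> f y = g y" "f differentiable (at x)"
  shows "g differentiable (at x)"
  using assms(4) has_derivative_transform_within_open[OF _ assms(1,2), of f _ UNIV g] assms(3)
  unfolding differentiable_def by blast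

lemma pd_eq_derivative:
  assumes "(f has_derivative D) (at x)"
  shows "pd i f x = D (axis i 1)"
  using frechet_derivative_at[OF assms] unfolding pd_def by simp

lemma pd_add:
  assumes "f differentiable (at x)" "g differentiable (at x)"
  shows "pd i (\<lambda>y. f y + g y) x = pd i f x + pd i g x"
  using pd_eq_derivative[OF has_derivative_add[OF assms[unfolded frechet_derivative_works]]]
  by (simp add: pd_def)

lemma pd_mult:
  fixes f g :: "pt \<Rightarrow> real"
  assumes "f differentiable (at x)" "g differentiable (at x)"
  shows "pd i (\<lambda>y. f y * g y) x = f x * pd i g x + pd i f x * g x"
  using pd_eq_derivative[OF has_derivative_mult[OF assms[unfolded frechet_derivative_works]]]
  by (simp add: pd_def)

lemma pd_inverse:
  fixes f :: "pt \<Rightarrow> real"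
  assumes "f differentiable (at x)" "f x \<noteq> 0"
  shows "pd i (\<lambda>y. inverse (f y)) x = - (inverse (f x) * pd i f x * inverse (f x))"
  using pd_eq_derivative
      [OF Deriv.has_derivative_inverse[OF assms(2) assms(1)[unfolded frechet_derivative_works]]]
  by (simp add: pd_def)

lemma pd_const: "pd i (\<lambda>y. c) x = 0"
  using pd_eq_derivative[OF has_derivative_const] by simp

lemma pd_component: "pd i (\<lambda>y::pt. y $ j) x = (if i = j then 1 else 0)"
  using pd_eq_derivative[OF bounded_linear_imp_has_derivative[OF bounded_linear_vec_nth]]
  by (simp add: axis_def)

lemma pd_scale:
  assumes "f differentiable (at x)"
  shows "pd i (\<lambda>y. c * f y) x = c * pd i f x"
  using pd_mult[of "\<lambda>_. c" x f] assms by (simp add: pd_const)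

definition twice_differentiable_on :: "pt set \<Rightarrow> (pt \<Rightarrow> real) \<Rightarrow> bool" where
  "twice_differentiable_on S f \<longleftrightarrow>
     (\<forall>y\<in>S. f differentiable (at y) \<and> (\<forall>j. pd j f differentiable (at y)))"

lemma twice_differentiable_onD:
  assumes "twice_differentiable_on S f" "y \<in> S"
  shows "f differentiable (at y)" "pd j f differentiable (at y)"
  using assms by (auto simp: twice_differentiable_on_def)

lemma twice_differentiable_on_subset:
  "twice_differentiable_on T f \<Longrightarrow> S \<subseteq> T \<Longrightarrow> twice_differentiable_on S f"
  unfolding twice_differentiable_on_def by blast

lemma twice_differentiable_onI:
  assumes "open S" "\<And>y. y \<in> S \<Longrightarrow> f differentiable (at y)"
    and "\<And>j y. y \<in> S \<Longrightarrow> pd j f y = g j y" "\<And>j y. y \<in> S \<Longrightarrow> g j differentiable (at y)"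
  shows "twice_differentiable_on S f"
  unfolding twice_differentiable_on_def
proof (intro ballI conjI allI)
  fix y j assume y: "y \<in> S"
  show "f differentiable (at y)" using assms(2) y .
  show "pd j f differentiable (at y)"
    by (rule differentiable_at_cong[OF assms(1) y _ assms(4)[OF y]]) (simp add: assms(3))
qed

lemma twice_differentiable_on_add:
  assumes "open S" "twice_differentiable_on S f" "twice_differentiable_on S g"
  shows "twice_differentiable_on S (\<lambda>y. f y + g y)"
proof (rule twice_differentiable_onI[OF assms(1), where g = "\<lambda>j y. pd j f y + pd j g y"])
  fix j y assume y: "y \<in> S"
  note d = twice_differentiable_onD[OF assms(2) y] twice_differentiable_onD[OF assms(3) y]
  show "(\<lambda>y. f y + g y) differentiable (at y)" using d by (intro derivative_intros)
  show "pd j (\<lambda>y. f y + g y) y = pd j f y + pd j g y" using d(1,3) by (rule pd_add)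
  show "(\<lambda>y. pd j f y + pd j g y) differentiable (at y)" using d by (intro derivative_intros)
qed

lemma twice_differentiable_on_mult:
  assumes "open S" "twice_differentiable_on S f" "twice_differentiable_on S g"
  shows "twice_differentiable_on S (\<lambda>y. f y * g y)"
proof (rule twice_differentiable_onI[OF assms(1),
      where g = "\<lambda>j y. f y * pd j g y + pd j f y * g y"])
  fix j y assume y: "y \<in> S"
  note d = twice_differentiable_onD[OF assms(2) y] twice_differentiable_onD[OF assms(3) y]
  show "(\<lambda>y. f y * g y) differentiable (at y)" using d by (intro derivative_intros)
  show "pd j (\<lambda>y. f y * g y) y = f y * pd j g y + pd j f y * g y" using d(1,3) by (rule pd_mult)
  show "(\<lambda>y. f y * pd j g y + pd j f y * g y) differentiable (at y)"
    using d by (intro derivative_intros)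
qed

lemma twice_differentiable_on_inverse:
  assumes "open S" "twice_differentiable_on S f" "\<And>y. y \<in> S \<Longrightarrow> f y \<noteq> 0"
  shows "twice_differentiable_on S (\<lambda>y. inverse (f y))"
proof (rule twice_differentiable_onI[OF assms(1),
      where g = "\<lambda>j y. - (inverse (f y) * pd j f y * inverse (f y))"])
  fix j y assume y: "y \<in> S"
  note d = twice_differentiable_onD[OF assms(2) y] assms(3)[OF y]
  show "(\<lambda>y. inverse (f y)) differentiable (at y)" using d by (intro derivative_intros)
  show "pd j (\<lambda>y. inverse (f y)) y = - (inverse (f y) * pd j f y * inverse (f y))"
    using d(1,3) by (rule pd_inverse)
  show "(\<lambda>y. - (inverse (f y) * pd j f y * inverse (f y))) differentiable (at y)"
    using d by (intro derivative_intros)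
qed

lemma twice_differentiable_on_const: "twice_differentiable_on S (\<lambda>y. c)"
proof -
  have "pd j (\<lambda>y. c) = (\<lambda>y. 0)" for j by (simp add: fun_eq_iff pd_const)
  then show ?thesis by (simp add: twice_differentiable_on_def)
qed

lemma twice_differentiable_on_component: "twice_differentiable_on S (\<lambda>y::pt. y $ j)"
proof -
  have "pd i (\<lambda>y::pt. y $ j) = (\<lambda>y. if i = j then 1 else 0)" for i
    by (simp add: fun_eq_iff pd_component)
  then show ?thesis
    unfolding twice_differentiable_on_def
    using bounded_linear_imp_differentiable[OF bounded_linear_vec_nth] by simp blast
qed

lemma twice_differentiable_on_diff:
  assumes "open S" "twice_differentiable_on S f" "twice_differentiable_on S g"
  shows "twice_differentiable_on S (\<lambda>y. f y - g y)"
  using twice_differentiable_on_add[OF assms(1,2)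
      twice_differentiable_on_mult[OF assms(1) twice_differentiable_on_const assms(3)], of "-1"]
  by simp

lemma smooth_on_iter_pd_differentiable:
  "smooth_on UNIV F \<Longrightarrow> iter_pd is F differentiable (at y)"
  unfolding smooth_on_def differentiable_on_def by simp

lemma smooth_on_twice_differentiable:
  "smooth_on UNIV F \<Longrightarrow> twice_differentiable_on S (iter_pd is F)"
  using smooth_on_iter_pd_differentiable[of F "_ # is"]
  by (auto simp: twice_differentiable_on_def smooth_on_iter_pd_differentiable)

lemma smooth_on_continuous_on:
  "smooth_on UNIV F \<Longrightarrow> continuous_on S (iter_pd is F)"
  unfolding smooth_on_def
  by (meson continuous_on_subset differentiable_imp_continuous_on subset_UNIV)

lemma smooth_upto_continuous_on:
  assumes "smooth_upto \<Omega> f"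
  shows "continuous_on (closure \<Omega>) f"
proof -
  obtain F where "smooth_on UNIV F" "\<And>x. x \<in> closure \<Omega> \<Longrightarrow> F x = f x"
    using assms unfolding smooth_upto_def by blast
  then show ?thesis
    using smooth_on_continuous_on[of F _ "[]"] continuous_on_eq by (metis iter_pd.simps(1))
qed

lemma pd_pd_add_scale:
  assumes "open S" "twice_differentiable_on S f" "twice_differentiable_on S g" "z \<in> S"
  shows "pd i (pd j (\<lambda>y. f y + c * g y)) z = pd i (pd j f) z + c * pd i (pd j g) z"
proof -
  have "pd j (\<lambda>y. f y + c * g y) y = pd j f y + c * pd j g y" if "y \<in> S" for y
    using twice_differentiable_onD(1)[OF assms(2) that] twice_differentiable_onD(1)[OF assms(3) that]
    by (simp add: pd_add pd_scale)
  then have "pd i (pd j (\<lambda>y. f y + c * g y)) z = pd i (\<lambda>y. pd j f y + c * pd j g y) z"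
    by (rule pd_cong[OF assms(1,4)])
  then show ?thesis
    using twice_differentiable_onD(2)[OF assms(2,4)] twice_differentiable_onD(2)[OF assms(3,4)]
    by (simp add: pd_add pd_scale)
qed

section \<open>Derivatives along lines\<close>

lemma has_real_derivative_along_line:
  fixes f :: "pt \<Rightarrow> real"
  assumes "f differentiable (at (z + t *\<^sub>R \<xi>))"
  shows "((\<lambda>s. f (z + s *\<^sub>R \<xi>)) has_real_derivative \<xi> \<bullet> grad f (z + t *\<^sub>R \<xi>)) (at t)"
proof -
  define D where "D = frechet_derivative f (at (z + t *\<^sub>R \<xi>))"
  have fd: "(f has_derivative D) (at (z + t *\<^sub>R \<xi>))"
    using assms unfolding D_def frechet_derivative_works .
  then have lin: "linear D" using has_derivative_linear by blast
  have "((\<lambda>s. z + s *\<^sub>R \<xi>) has_derivative (\<lambda>h. h *\<^sub>R \<xi>)) (at t)"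
    by (auto intro!: derivative_eq_intros)
  from has_derivative_compose[OF this fd]
  have "((\<lambda>s. f (z + s *\<^sub>R \<xi>)) has_derivative (\<lambda>h. D (h *\<^sub>R \<xi>))) (at t)"
    by (simp add: o_def)
  moreover have "D (h *\<^sub>R \<xi>) = (\<xi> \<bullet> grad f (z + t *\<^sub>R \<xi>)) * h" for h
  proof -
    have "\<xi> = \<xi>$1 *\<^sub>R axis 1 1 + \<xi>$2 *\<^sub>R axis 2 1"
      by (simp add: vec_eq_iff forall_2 axis_def)
    then have "D \<xi> = D (\<xi>$1 *\<^sub>R axis 1 1 + \<xi>$2 *\<^sub>R axis 2 1)"
      by (rule arg_cong)
    also have "\<dots> = \<xi>$1 * D (axis 1 1) + \<xi>$2 * D (axis 2 1)"
      by (simp add: linear_add[OF lin] linear_scale[OF lin])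
    finally show ?thesis
      using pd_eq_derivative[OF fd] linear_scale[OF lin, of h \<xi>]
      by (simp add: grad_def inner_vec_def sum_2 algebra_simps)
  qed
  then have "(\<lambda>h. D (h *\<^sub>R \<xi>)) = (*) (\<xi> \<bullet> grad f (z + t *\<^sub>R \<xi>))"
    by (simp add: fun_eq_iff mult.commute)
  ultimately show ?thesis
    unfolding has_field_derivative_def by simp
qed

lemma hess_form_expand:
  "\<xi> \<bullet> (hess f z *v \<xi>) = (\<Sum>i\<in>UNIV. \<Sum>j\<in>UNIV. \<xi>$i * \<xi>$j * pd i (pd j f) z)"
  by (simp add: hess_def inner_vec_def matrix_vector_mult_def sum_2 algebra_simps)

lemma lap_eq_trace: "lap f x = hess f x $ 1 $ 1 + hess f x $ 2 $ 2"
  by (simp add: lap_def hess_def sum_2)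

lemma has_real_derivative_along_line_grad:
  assumes "\<And>j. pd j f differentiable (at (z + t *\<^sub>R \<xi>))"
  shows "((\<lambda>s. \<xi> \<bullet> grad f (z + s *\<^sub>R \<xi>)) has_real_derivative \<xi> \<bullet> (hess f (z + t *\<^sub>R \<xi>) *v \<xi>)) (at t)"
proof -
  have "((\<lambda>s. pd j f (z + s *\<^sub>R \<xi>)) has_real_derivative \<xi> \<bullet> grad (pd j f) (z + t *\<^sub>R \<xi>)) (at t)" for j
    using has_real_derivative_along_line assms by blast
  then have "((\<lambda>s. \<xi>$1 * pd 1 f (z + s *\<^sub>R \<xi>) + \<xi>$2 * pd 2 f (z + s *\<^sub>R \<xi>)) has_real_derivative
      \<xi>$1 * (\<xi> \<bullet> grad (pd 1 f) (z + t *\<^sub>R \<xi>)) + \<xi>$2 * (\<xi> \<bullet> grad (pd 2 f) (z + t *\<^sub>R \<xi>))) (at t)"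
    by (auto intro!: derivative_eq_intros)
  then show ?thesis
    unfolding hess_form_expand by (simp add: grad_def inner_vec_def sum_2 algebra_simps)
qed

lemma line_in_open:
  fixes z \<xi> :: "'a::real_normed_vector"
  assumes "open S" "z \<in> S"
  obtains \<delta> where "\<delta> > 0" "\<And>s. \<bar>s\<bar> < \<delta> \<Longrightarrow> z + s *\<^sub>R \<xi> \<in> S"
proof -
  obtain e where e: "e > 0" "ball z e \<subseteq> S" using assms open_contains_ball by blast
  define \<delta> where "\<delta> = e / (norm \<xi> + 1)"
  have np: "norm \<xi> + 1 > 0" using norm_ge_zero[of \<xi>] by linarith
  have "z + s *\<^sub>R \<xi> \<in> S" if "\<bar>s\<bar> < \<delta>" for s
  proof -
    have "norm (s *\<^sub>R \<xi>) \<le> \<bar>s\<bar> * (norm \<xi> + 1)" by (simp add: mult_left_mono)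
    also have "\<dots> < e" using that np by (simp add: \<delta>_def field_simps)
    finally show ?thesis using e(2) by (auto simp: dist_norm)
  qed
  moreover have "\<delta> > 0" using e np by (simp add: \<delta>_def)
  ultimately show ?thesis using that by blast
qed

section \<open>Second-order conditions at extrema\<close>

lemma local_min_second_derivative_nonneg:
  fixes g g' :: "real \<Rightarrow> real"
  assumes "\<delta> > 0" "\<And>s. \<bar>s\<bar> < \<delta> \<Longrightarrow> (g has_real_derivative g' s) (at s)"
    "(g' has_real_derivative G) (at 0)" "\<And>s. \<bar>s\<bar> < \<delta> \<Longrightarrow> g 0 \<le> g s"
  shows "G \<ge> 0"
proof (rule ccontr)
  assume "\<not> G \<ge> 0"
  then obtain d where d: "d > 0" "\<And>h. h > 0 \<Longrightarrow> h < d \<Longrightarrow> g' 0 > g' (0 + h)"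
    using DERIV_neg_dec_right[OF assms(3)] by force
  have g0: "g' 0 = 0"
    using DERIV_local_min[OF assms(2)[of 0] assms(1)] assms(1,4) by simp
  define h where "h = min d \<delta> / 2"
  have h: "h > 0" "h < d" "h < \<delta>" using d assms(1) by (auto simp: h_def)
  obtain z where z: "0 < z" "z < h" "g h - g 0 = (h - 0) * g' z"
    using MVT2[OF h(1), of g g'] assms(2) h by force
  have "g' z < 0" using d(2)[of z] z h g0 by simp
  then have "h * g' z < 0" using h(1) by (rule mult_pos_neg[rotated])
  then have "g h < g 0" using z by simp
  with assms(4)[of h] h show False by simp
qed

lemma local_max_second_derivative_nonpos:
  fixes g g' :: "real \<Rightarrow> real"
  assumes "\<delta> > 0" "\<And>s. \<bar>s\<bar> < \<delta> \<Longrightarrow> (g has_real_derivative g' s) (at s)"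
    "(g' has_real_derivative G) (at 0)" "\<And>s. \<bar>s\<bar> < \<delta> \<Longrightarrow> g s \<le> g 0"
  shows "G \<le> 0"
  using local_min_second_derivative_nonneg[of \<delta> "\<lambda>s. - g s" "\<lambda>s. - g' s" "- G"] assms
  by (auto intro!: derivative_eq_intros)

lemma hess_form_nonneg_at_local_min:
  assumes "open S" "z \<in> S" "\<And>y. y \<in> S \<Longrightarrow> f differentiable (at y)"
    "\<And>j. pd j f differentiable (at z)" "\<And>y. y \<in> S \<Longrightarrow> f z \<le> f y"
  shows "\<xi> \<bullet> (hess f z *v \<xi>) \<ge> 0"
proof -
  obtain \<delta> where \<delta>: "\<delta> > 0" "\<And>s. \<bar>s\<bar> < \<delta> \<Longrightarrow> z + s *\<^sub>R \<xi> \<in> S"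
    using line_in_open[OF assms(1,2)] by blast
  show ?thesis
  proof (rule local_min_second_derivative_nonneg
      [of \<delta> "\<lambda>s. f (z + s *\<^sub>R \<xi>)" "\<lambda>s. \<xi> \<bullet> grad f (z + s *\<^sub>R \<xi>)"])
    show "((\<lambda>s. \<xi> \<bullet> grad f (z + s *\<^sub>R \<xi>)) has_real_derivative \<xi> \<bullet> (hess f z *v \<xi>)) (at 0)"
      using has_real_derivative_along_line_grad[of f z 0 \<xi>] assms(4) by simp
  next
    fix s :: real assume "\<bar>s\<bar> < \<delta>"
    then show "((\<lambda>s. f (z + s *\<^sub>R \<xi>)) has_real_derivative \<xi> \<bullet> grad f (z + s *\<^sub>R \<xi>)) (at s)"
      using has_real_derivative_along_line assms(3) \<delta>(2) by simp
  next
    fix s :: real assume "\<bar>s\<bar> < \<delta>"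
    then show "f (z + 0 *\<^sub>R \<xi>) \<le> f (z + s *\<^sub>R \<xi>)" using assms(5) \<delta>(2) by simp
  qed (rule \<delta>(1))
qed

lemma hess_form_nonpos_at_local_max:
  assumes "open S" "z \<in> S" "\<And>y. y \<in> S \<Longrightarrow> f differentiable (at y)"
    "\<And>j. pd j f differentiable (at z)" "\<And>y. y \<in> S \<Longrightarrow> f y \<le> f z"
  shows "\<xi> \<bullet> (hess f z *v \<xi>) \<le> 0"
proof -
  obtain \<delta> where \<delta>: "\<delta> > 0" "\<And>s. \<bar>s\<bar> < \<delta> \<Longrightarrow> z + s *\<^sub>R \<xi> \<in> S"
    using line_in_open[OF assms(1,2)] by blast
  show ?thesis
  proof (rule local_max_second_derivative_nonpos
      [of \<delta> "\<lambda>s. f (z + s *\<^sub>R \<xi>)" "\<lambda>s. \<xi> \<bullet> grad f (z + s *\<^sub>R \<xi>)"])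
    show "((\<lambda>s. \<xi> \<bullet> grad f (z + s *\<^sub>R \<xi>)) has_real_derivative \<xi> \<bullet> (hess f z *v \<xi>)) (at 0)"
      using has_real_derivative_along_line_grad[of f z 0 \<xi>] assms(4) by simp
  next
    fix s :: real assume "\<bar>s\<bar> < \<delta>"
    then show "((\<lambda>s. f (z + s *\<^sub>R \<xi>)) has_real_derivative \<xi> \<bullet> grad f (z + s *\<^sub>R \<xi>)) (at s)"
      using has_real_derivative_along_line assms(3) \<delta>(2) by simp
  next
    fix s :: real assume "\<bar>s\<bar> < \<delta>"
    then show "f (z + s *\<^sub>R \<xi>) \<le> f (z + 0 *\<^sub>R \<xi>)" using assms(5) \<delta>(2) by simp
  qed (rule \<delta>(1))
qed

section \<open>Symmetry of second partial derivatives\<close>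

lemma has_real_derivative_along_axis:
  fixes f :: "pt \<Rightarrow> real"
  assumes "f differentiable (at (z + t *\<^sub>R axis i 1))"
  shows "((\<lambda>s. f (z + s *\<^sub>R axis i 1)) has_real_derivative pd i f (z + t *\<^sub>R axis i 1)) (at t)"
  using has_real_derivative_along_line[OF assms] by (simp add: grad_def inner_axis')

lemma second_difference_mvt:
  fixes F :: "pt \<Rightarrow> real"
  assumes d1: "\<And>y. F differentiable (at y)" and d2: "\<And>k y. pd k F differentiable (at y)"
    and h: "h > 0"
  obtains y where "dist y x < 2 * h"
    "F (x + h *\<^sub>R axis i 1 + h *\<^sub>R axis j 1) - F (x + h *\<^sub>R axis i 1) - F (x + h *\<^sub>R axis j 1) + F x
     = h * h * pd j (pd i F) y"
proof -
  define ea where "ea = (axis i 1 :: pt)"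
  define eb where "eb = (axis j 1 :: pt)"
  define \<alpha> where "\<alpha> t = F ((x + h *\<^sub>R eb) + t *\<^sub>R ea) - F (x + t *\<^sub>R ea)" for t
  define \<alpha>' where "\<alpha>' t = pd i F ((x + h *\<^sub>R eb) + t *\<^sub>R ea) - pd i F (x + t *\<^sub>R ea)" for t
  have "(\<alpha> has_real_derivative \<alpha>' t) (at t)" for t
    unfolding \<alpha>_def \<alpha>'_def ea_def
    by (intro DERIV_diff has_real_derivative_along_axis d1)
  then obtain \<tau> where \<tau>: "0 < \<tau>" "\<tau> < h" "\<alpha> h - \<alpha> 0 = (h - 0) * \<alpha>' \<tau>"
    using MVT2[OF h, of \<alpha> \<alpha>'] by blast
  define \<beta> where "\<beta> s = pd i F ((x + \<tau> *\<^sub>R ea) + s *\<^sub>R eb)" for s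
  have "(\<beta> has_real_derivative pd j (pd i F) ((x + \<tau> *\<^sub>R ea) + s *\<^sub>R eb)) (at s)" for s
    unfolding \<beta>_def eb_def by (intro has_real_derivative_along_axis d2)
  then obtain \<sigma> where \<sigma>: "0 < \<sigma>" "\<sigma> < h"
    "\<beta> h - \<beta> 0 = (h - 0) * pd j (pd i F) ((x + \<tau> *\<^sub>R ea) + \<sigma> *\<^sub>R eb)"
    using MVT2[OF h, of \<beta> "\<lambda>s. pd j (pd i F) ((x + \<tau> *\<^sub>R ea) + s *\<^sub>R eb)"] by blast
  have "F (x + h *\<^sub>R ea + h *\<^sub>R eb) - F (x + h *\<^sub>R ea) - F (x + h *\<^sub>R eb) + F x = \<alpha> h - \<alpha> 0"
    unfolding \<alpha>_def by (simp add: algebra_simps)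
  also have "\<dots> = h * (\<beta> h - \<beta> 0)"
    using \<tau>(3) by (simp add: \<alpha>'_def \<beta>_def algebra_simps)
  also have "\<dots> = h * h * pd j (pd i F) (x + \<tau> *\<^sub>R ea + \<sigma> *\<^sub>R eb)"
    using \<sigma>(3) by simp
  finally have diff: "F (x + h *\<^sub>R ea + h *\<^sub>R eb) - F (x + h *\<^sub>R ea) - F (x + h *\<^sub>R eb) + F x
      = h * h * pd j (pd i F) (x + \<tau> *\<^sub>R ea + \<sigma> *\<^sub>R eb)" .
  have dist: "dist (x + \<tau> *\<^sub>R ea + \<sigma> *\<^sub>R eb) x < 2 * h"
  proof -
    have "dist (x + \<tau> *\<^sub>R ea + \<sigma> *\<^sub>R eb) x = norm (\<tau> *\<^sub>R ea + \<sigma> *\<^sub>R eb)"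
      by (simp add: dist_norm algebra_simps)
    also have "\<dots> \<le> norm (\<tau> *\<^sub>R ea) + norm (\<sigma> *\<^sub>R eb)" by (rule norm_triangle_ineq)
    also have "\<dots> = \<tau> + \<sigma>" using \<tau> \<sigma> by (simp add: ea_def eb_def)
    finally show ?thesis using \<tau> \<sigma> by simp
  qed
  from that[OF dist[unfolded ea_def eb_def] diff[unfolded ea_def eb_def]] show ?thesis .
qed

lemma pd_pd_commute:
  fixes F :: "pt \<Rightarrow> real"
  assumes d1: "\<And>y. F differentiable (at y)" and d2: "\<And>k y. pd k F differentiable (at y)"
    and c1: "continuous_on UNIV (pd i (pd j F))" and c2: "continuous_on UNIV (pd j (pd i F))"
  shows "pd i (pd j F) x = pd j (pd i F) x"
proof (rule ccontr)
  assume ne: "pd i (pd j F) x \<noteq> pd j (pd i F) x"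
  define d where "d = \<bar>pd i (pd j F) x - pd j (pd i F) x\<bar> / 2"
  have d: "d > 0" using ne by (simp add: d_def)
  obtain \<delta>1 where \<delta>1: "\<delta>1 > 0" "\<And>y. dist y x < \<delta>1 \<Longrightarrow> dist (pd i (pd j F) y) (pd i (pd j F) x) < d"
    using c1 d unfolding continuous_on_iff by (metis UNIV_I)
  obtain \<delta>2 where \<delta>2: "\<delta>2 > 0" "\<And>y. dist y x < \<delta>2 \<Longrightarrow> dist (pd j (pd i F) y) (pd j (pd i F) x) < d"
    using c2 d unfolding continuous_on_iff by (metis UNIV_I)
  define h where "h = min \<delta>1 \<delta>2 / 2"
  have h: "h > 0" "2 * h \<le> \<delta>1" "2 * h \<le> \<delta>2" using \<delta>1 \<delta>2 by (auto simp: h_def)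
  obtain y where y: "dist y x < 2 * h"
    "F (x + h *\<^sub>R axis i 1 + h *\<^sub>R axis j 1) - F (x + h *\<^sub>R axis i 1) - F (x + h *\<^sub>R axis j 1) + F x
     = h * h * pd j (pd i F) y"
    using second_difference_mvt[OF d1 d2 h(1)] by blast
  obtain y' where y': "dist y' x < 2 * h"
    "F (x + h *\<^sub>R axis j 1 + h *\<^sub>R axis i 1) - F (x + h *\<^sub>R axis j 1) - F (x + h *\<^sub>R axis i 1) + F x
     = h * h * pd i (pd j F) y'"
    using second_difference_mvt[OF d1 d2 h(1)] by blast
  have "pd j (pd i F) y = pd i (pd j F) y'"
    using y(2) y'(2) h(1) by (simp add: algebra_simps)
  moreover have "dist (pd j (pd i F) y) (pd j (pd i F) x) < d" using \<delta>2(2) y(1) h(3) by simp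
  moreover have "dist (pd i (pd j F) y') (pd i (pd j F) x) < d" using \<delta>1(2) y'(1) h(2) by simp
  ultimately have "\<bar>pd i (pd j F) x - pd j (pd i F) x\<bar> < 2 * d"
    by (simp add: dist_real_def)
  then show False by (simp add: d_def)
qed

section \<open>Two-by-two matrices\<close>

definition adj2 :: "real^2^2 \<Rightarrow> real^2^2" where
  "adj2 H = (\<chi> i j. if i = 1 then (if j = 1 then H$2$2 else - H$1$2)
                     else (if j = 1 then - H$2$1 else H$1$1))"

lemma det_scaleR_matrix_inv_2:
  fixes H :: "real^2^2"
  assumes "det H \<noteq> 0"
  shows "det H *\<^sub>R matrix_inv H = adj2 H"
proof -
  define M where "M = inverse (det H) *\<^sub>R adj2 H"
  have "H ** adj2 H = det H *\<^sub>R mat 1" "adj2 H ** H = det H *\<^sub>R mat 1"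
    by (auto simp: adj2_def vec_eq_iff forall_2 matrix_matrix_mult_def sum_2 mat_def det_2
        algebra_simps)
  then have HM: "H ** M = mat 1" and MH: "M ** H = mat 1"
    using assms by (simp_all add: M_def matrix_scalar_ac scalar_matrix_assoc[symmetric])
  moreover have "H ** matrix_inv H = mat 1 \<and> matrix_inv H ** H = mat 1"
    unfolding matrix_inv_def by (rule someI[of _ M]) (use HM MH in simp)
  ultimately have "matrix_inv H = M"
    by (metis matrix_mul_assoc matrix_mul_lid matrix_mul_rid)
  then show ?thesis using assms by (simp add: M_def)
qed

lemma quadratic_form_2:
  fixes H :: "real^2^2" and \<xi> :: pt
  shows "\<xi> \<bullet> (H *v \<xi>) = H$1$1 * (\<xi>$1)^2 + (H$1$2 + H$2$1) * (\<xi>$1 * \<xi>$2) + H$2$2 * (\<xi>$2)^2"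
  by (simp add: inner_vec_def matrix_vector_mult_def sum_2 algebra_simps power2_eq_square)

lemma norm_pow_2_eq: "(norm (\<xi>::pt))^2 = (\<xi>$1)^2 + (\<xi>$2)^2"
  unfolding power2_norm_eq_inner by (simp add: inner_vec_def sum_2 power2_eq_square)

lemma binary_quadratic_form_nonneg_imp:
  fixes a b c :: real
  assumes "\<And>x y. a * x^2 + b * (x * y) + c * y^2 \<ge> 0"
  shows "a \<ge> 0" "c \<ge> 0" "b^2 \<le> 4 * a * c"
proof -
  show a: "a \<ge> 0" using assms[of 1 0] by simp
  show "c \<ge> 0" using assms[of 0 1] by simp
  show "b^2 \<le> 4 * a * c"
  proof (cases "a = 0")
    case True
    show ?thesis
    proof (rule ccontr)
      assume "\<not> ?thesis"
      then have "b \<noteq> 0" using True by auto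
      with True assms[of "- (c + 1) / b" 1] show False by (simp add: field_simps)
    qed
  next
    case False
    have "a * (-b)^2 + b * ((-b) * (2*a)) + c * (2*a)^2 \<ge> 0" by (rule assms)
    then have "a * (4 * a * c - b^2) \<ge> 0" by (simp add: algebra_simps power2_eq_square)
    then show ?thesis using False a by (simp add: zero_le_mult_iff)
  qed
qed

lemma quadratic_form_ge_imp_entries:
  fixes H :: "real^2^2"
  assumes "\<And>\<xi>::pt. \<xi> \<bullet> (H *v \<xi>) \<ge> s * (norm \<xi>)^2"
  shows "H$1$1 \<ge> s" "H$2$2 \<ge> s" "(H$1$2 + H$2$1)^2 \<le> 4 * (H$1$1 - s) * (H$2$2 - s)"
proof -
  have "(H$1$1 - s) * x^2 + (H$1$2 + H$2$1) * (x * y) + (H$2$2 - s) * y^2 \<ge> 0" for x y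
    using assms[of "\<chi> i. if i = 1 then x else y"]
    by (simp add: quadratic_form_2 norm_pow_2_eq algebra_simps)
  from binary_quadratic_form_nonneg_imp[OF this]
  show "H$1$1 \<ge> s" "H$2$2 \<ge> s" "(H$1$2 + H$2$1)^2 \<le> 4 * (H$1$1 - s) * (H$2$2 - s)"
    by simp_all
qed

lemma det_ge_of_quadratic_form_ge:
  fixes H :: "real^2^2"
  assumes "\<And>\<xi>::pt. \<xi> \<bullet> (H *v \<xi>) \<ge> s * (norm \<xi>)^2" "s \<ge> 0"
  shows "det H \<ge> s^2"
proof -
  note f = quadratic_form_ge_imp_entries[OF assms(1)]
  define a b c d where "a = H$1$1" "b = H$1$2" "c = H$2$1" "d = H$2$2"
  have "4 * (b * c) \<le> (b + c)^2"
    using sum_squares_ge_zero[of "b - c" 0] by (simp add: power2_eq_square algebra_simps)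
  moreover have "s * (a - s) \<ge> 0" "s * (d - s) \<ge> 0"
    using f assms(2) by (simp_all add: a_b_c_d_def)
  ultimately have "4 * (a * d - b * c) \<ge> 4 * s^2"
    using f(3) unfolding a_b_c_d_def[symmetric] by (simp add: algebra_simps power2_eq_square)
  then show ?thesis by (simp add: det_2 a_b_c_d_def)
qed

text \<open>\<open>adj2 H\<close> is positive semidefinite along with \<open>H\<close>, and the trace of a product of two
  positive semidefinite matrices is nonnegative.\<close>
lemma trace_adj2_mult_nonneg:
  fixes H P :: "real^2^2"
  assumes "H$1$2 = H$2$1" "\<And>\<xi>. \<xi> \<bullet> (H *v \<xi>) \<ge> 0" "\<And>\<xi>. \<xi> \<bullet> (P *v \<xi>) \<ge> 0"
  shows "(\<Sum>i\<in>UNIV. \<Sum>j\<in>UNIV. adj2 H $ i $ j * P $ i $ j) \<ge> 0"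
proof -
  define a b d where "a = H$1$1" "b = H$1$2" "d = H$2$2"
  define p q r where "p = P$1$1" "q = P$1$2 + P$2$1" "r = P$2$2"
  have H: "a \<ge> 0" "d \<ge> 0" "b^2 \<le> a * d"
    using quadratic_form_ge_imp_entries[where s = 0 and H = H] assms(1,2)
    by (auto simp: a_b_d_def power2_eq_square)
  have P: "p \<ge> 0" "r \<ge> 0" "q^2 \<le> 4 * (p * r)"
    using quadratic_form_ge_imp_entries[where s = 0 and H = P] assms(3) by (auto simp: p_q_r_def)
  have "b^2 * q^2 \<le> (a * d) * (4 * (p * r))"
    by (rule mult_mono) (use H P in auto)
  also have "\<dots> \<le> (d * p + a * r)^2"
    using sum_squares_ge_zero[of "d * p - a * r" 0] by (simp add: power2_eq_square algebra_simps)
  finally have "(b * q)^2 \<le> (d * p + a * r)^2" by (simp add: power_mult_distrib)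
  moreover have "d * p + a * r \<ge> 0" using H P by simp
  ultimately have "b * q \<le> d * p + a * r"
    using abs_le_square_iff[of "b * q" "d * p + a * r"] by simp
  then show ?thesis
    using assms(1) by (simp add: adj2_def sum_2 a_b_d_def p_q_r_def algebra_simps)
qed

lemma quadratic_form_le_norm_trace:
  fixes H :: "real^2^2"
  assumes "\<And>\<xi>::pt. \<xi> \<bullet> (H *v \<xi>) \<ge> 0"
  shows "g \<bullet> (H *v g) \<le> (norm g)^2 * (H$1$1 + H$2$2)"
proof -
  define a q d where "a = H$1$1" "q = H$1$2 + H$2$1" "d = H$2$2"
  define x y where "x = g$1" "y = g$2"
  have H: "a \<ge> 0" "d \<ge> 0" "q^2 \<le> 4 * a * d"
    using quadratic_form_ge_imp_entries[where s = 0 and H = H] assms by (auto simp: a_q_d_def)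
  have "a * y^2 - q * (x * y) + d * x^2 \<ge> 0"
  proof (cases "a = 0")
    case True
    then show ?thesis using H by simp
  next
    case False
    have "4 * a * (a * y^2 - q * (x * y) + d * x^2) = (2*a*y - q*x)^2 + (4*a*d - q^2) * x^2"
      by (simp add: power2_eq_square algebra_simps)
    also have "\<dots> \<ge> 0" using H by simp
    finally show ?thesis using False H(1) by (simp add: zero_le_mult_iff)
  qed
  then show ?thesis
    by (simp add: quadratic_form_2 norm_pow_2_eq a_q_d_def x_y_def algebra_simps)
qed

section \<open>Extremum principles on bounded open sets\<close>

lemma frontier_subset_closure: "frontier S \<subseteq> closure S"
  by (auto simp: frontier_def)

lemma continuous_attains_inf_frontier:
  fixes S :: "'a::euclidean_space set" and f :: "'a \<Rightarrow> real"
  assumes "open S" "bounded S" "continuous_on (closure S) f" "x \<in> S"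
    and no_interior_min: "\<And>z. z \<in> S \<Longrightarrow> (\<And>y. y \<in> S \<Longrightarrow> f z \<le> f y) \<Longrightarrow> False"
  obtains z where "z \<in> frontier S" "\<And>y. y \<in> closure S \<Longrightarrow> f z \<le> f y"
proof -
  have "closure S \<noteq> {}" using assms(4) closure_subset by blast
  then obtain z where z: "z \<in> closure S" "\<And>y. y \<in> closure S \<Longrightarrow> f z \<le> f y"
    using continuous_attains_inf[of "closure S" f] assms(2,3) compact_closure by metis
  have "z \<notin> S" using no_interior_min z(2) closure_subset by blast
  then have "z \<in> frontier S" using z(1) by (simp add: frontier_def interior_open[OF assms(1)])
  with z(2) show ?thesis using that by blast
qed

lemma continuous_attains_sup_frontier:
  fixes S :: "'a::euclidean_space set" and f :: "'a \<Rightarrow> real"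
  assumes "open S" "bounded S" "continuous_on (closure S) f" "x \<in> S"
    and no_interior_max: "\<And>z. z \<in> S \<Longrightarrow> (\<And>y. y \<in> S \<Longrightarrow> f y \<le> f z) \<Longrightarrow> False"
  obtains z where "z \<in> frontier S" "\<And>y. y \<in> closure S \<Longrightarrow> f y \<le> f z"
proof -
  obtain z where "z \<in> frontier S" "\<And>y. y \<in> closure S \<Longrightarrow> - f z \<le> - f y"
  proof (rule continuous_attains_inf_frontier[OF assms(1,2) _ assms(4), where f = "\<lambda>y. - f y"])
    show "continuous_on (closure S) (\<lambda>y. - f y)" using assms(3) by (rule continuous_on_minus)
  next
    fix z assume "z \<in> S" "\<And>y. y \<in> S \<Longrightarrow> - f z \<le> - f y"
    then show False by (meson neg_le_iff_le no_interior_max)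
  qed (rule that)
  then show ?thesis using that by simp
qed

lemma hess_form_add_scale:
  assumes "open S" "twice_differentiable_on S f" "twice_differentiable_on S g" "z \<in> S"
  shows "\<xi> \<bullet> (hess (\<lambda>y. f y + c * g y) z *v \<xi>) = \<xi> \<bullet> (hess f z *v \<xi>) + c * (\<xi> \<bullet> (hess g z *v \<xi>))"
  unfolding hess_form_expand pd_pd_add_scale[OF assms] by (simp add: sum_2 algebra_simps)

text \<open>A comparison principle: \<open>F - v\<close> cannot have an interior minimum, where it would give
  \<open>D\<^sup>2F \<ge> D\<^sup>2v \<ge> s\<close> and thus \<open>det D\<^sup>2F \<ge> s\<^sup>2\<close>.\<close>
lemma le_of_hess_det_comparison:
  fixes F v :: "pt \<Rightarrow> real"
  assumes "open S" "bounded S" "y \<in> closure S"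
    and F: "twice_differentiable_on UNIV F" and v: "twice_differentiable_on UNIV v"
    and "s \<ge> 0" and v_hess: "\<And>z \<xi>. z \<in> S \<Longrightarrow> s * (norm \<xi>)^2 \<le> \<xi> \<bullet> (hess v z *v \<xi>)"
    and F_det: "\<And>z. z \<in> S \<Longrightarrow> det (hess F z) < s^2"
    and boundary: "\<And>y. y \<in> frontier S \<Longrightarrow> v y \<le> F y"
  shows "v y \<le> F y"
proof -
  obtain x where x: "x \<in> S" using assms(3) by (metis closure_empty all_not_in_conv)
  define Y where "Y y = F y + (-1) * v y" for y
  have Y: "twice_differentiable_on UNIV Y"
    unfolding Y_def[abs_def]
    by (intro twice_differentiable_on_add twice_differentiable_on_mult
        twice_differentiable_on_const F v open_UNIV)
  have "continuous_on (closure S) Y"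
    using twice_differentiable_onD(1)[OF Y UNIV_I]
    by (intro continuous_at_imp_continuous_on ballI differentiable_imp_continuous_within)
  then obtain z where z: "z \<in> frontier S" "\<And>y. y \<in> closure S \<Longrightarrow> Y z \<le> Y y"
  proof (rule continuous_attains_inf_frontier[OF assms(1,2) _ x])
    fix z assume z: "z \<in> S" and min: "\<And>y. y \<in> S \<Longrightarrow> Y z \<le> Y y"
    have "s * (norm \<xi>)^2 \<le> \<xi> \<bullet> (hess F z *v \<xi>)" for \<xi>
    proof -
      have "0 \<le> \<xi> \<bullet> (hess Y z *v \<xi>)"
        by (rule hess_form_nonneg_at_local_min[OF assms(1) z])
          (use Y min in \<open>auto simp: twice_differentiable_on_def\<close>)
      also have "\<dots> = \<xi> \<bullet> (hess F z *v \<xi>) - \<xi> \<bullet> (hess v z *v \<xi>)"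
        unfolding Y_def[abs_def] hess_form_add_scale[OF open_UNIV F v UNIV_I] by simp
      finally show ?thesis using v_hess[OF z, of \<xi>] by linarith
    qed
    then have "s^2 \<le> det (hess F z)" using det_ge_of_quadratic_form_ge \<open>s \<ge> 0\<close> by blast
    with F_det[OF z] show False by simp
  qed (rule that)
  have "Y z \<ge> 0" using boundary[OF z(1)] by (simp add: Y_def)
  with z(2)[OF assms(3)] show ?thesis by (simp add: Y_def)
qed

section \<open>Gradient bounds from a barrier\<close>

lemma ray_exits_through_frontier:
  fixes x e :: "'a::real_normed_vector"
  assumes "open S" "bounded S" "x \<in> S" "e \<noteq> 0"
  obtains t where "t > 0" "x + t *\<^sub>R e \<in> frontier S" "\<And>s. 0 \<le> s \<Longrightarrow> s < t \<Longrightarrow> x + s *\<^sub>R e \<in> S"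
proof -
  define T where "T = {t. 0 \<le> t \<and> x + t *\<^sub>R e \<notin> S}"
  have ne: "norm e > 0" using assms(4) by simp
  obtain r where r: "\<And>y. y \<in> S \<Longrightarrow> norm y \<le> r" using assms(2) unfolding bounded_iff by blast
  define t0 where "t0 = (\<bar>r\<bar> + norm x + 1) / norm e"
  have "norm (t0 *\<^sub>R e) = \<bar>r\<bar> + norm x + 1"
    using ne by (simp add: t0_def)
  then have "norm (x + t0 *\<^sub>R e) > r"
    using norm_triangle_ineq4[of "x + t0 *\<^sub>R e" x] abs_ge_self[of r] by simp
  then have "x + t0 *\<^sub>R e \<notin> S" using r by (meson not_le)
  moreover have "0 \<le> t0" using ne by (simp add: t0_def)
  ultimately have "T \<noteq> {}" by (auto simp: T_def)
  moreover have bdd: "bdd_below T" by (rule bdd_belowI[of _ 0]) (simp add: T_def)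
  moreover have "closed T"
  proof -
    have "T = {0..} \<inter> (\<lambda>t. x + t *\<^sub>R e) -` (- S)" by (auto simp: T_def)
    then show ?thesis
      using assms(1) by (auto intro!: closed_vimage continuous_intros)
  qed
  ultimately have tT: "Inf T \<in> T" by (rule closed_contains_Inf)
  define t where "t = Inf T"
  have seg: "x + s *\<^sub>R e \<in> S" if "0 \<le> s" "s < t" for s
  proof (rule ccontr)
    assume "x + s *\<^sub>R e \<notin> S"
    then have "t \<le> s" unfolding t_def using that(1) by (intro cInf_lower bdd) (simp add: T_def)
    with that(2) show False by simp
  qed
  have "t \<noteq> 0" using tT assms(3) by (auto simp: T_def t_def)
  then have t: "t > 0" using tT by (simp add: T_def t_def)
  have "x + t *\<^sub>R e \<in> closure S"
  proof -
    have "((\<lambda>n. x + (t - t / Suc n) *\<^sub>R e) \<longlongrightarrow> x + (t - 0) *\<^sub>R e) sequentially"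
      using LIMSEQ_Suc[OF lim_const_over_n[of t]] by (intro tendsto_intros) simp
    then have "((\<lambda>n. x + (t - t / Suc n) *\<^sub>R e) \<longlongrightarrow> x + t *\<^sub>R e) sequentially"
      by simp
    moreover have "x + (t - t / Suc n) *\<^sub>R e \<in> S" for n
      using t by (intro seg) (auto simp: field_simps)
    ultimately show ?thesis
      unfolding closure_sequential by (intro exI[of _ "\<lambda>n. x + (t - t / Suc n) *\<^sub>R e"]) simp
  qed
  moreover have "x + t *\<^sub>R e \<notin> S" using tT by (simp add: T_def t_def)
  ultimately have "x + t *\<^sub>R e \<in> frontier S"
    by (simp add: frontier_def interior_open[OF assms(1)])
  from that[OF t this seg] show ?thesis .
qed

lemma directional_derivative_increasing_bound:
  fixes F :: "pt \<Rightarrow> real"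
  assumes F: "\<And>y. F differentiable (at y)" "\<And>j y. pd j F differentiable (at y)" and "t > 0"
    and convex: "\<And>s. 0 < s \<Longrightarrow> s < t \<Longrightarrow> e \<bullet> (hess F (x + s *\<^sub>R e) *v e) \<ge> 0"
  shows "t * (e \<bullet> grad F x) \<le> F (x + t *\<^sub>R e) - F x"
proof -
  define g' where "g' s = e \<bullet> grad F (x + s *\<^sub>R e)" for s
  have "((\<lambda>s. F (x + s *\<^sub>R e)) has_real_derivative g' s) (at s)" for s
    unfolding g'_def by (rule has_real_derivative_along_line[OF F(1)])
  then obtain \<tau> where \<tau>: "0 < \<tau>" "\<tau> < t" "F (x + t *\<^sub>R e) - F (x + 0 *\<^sub>R e) = (t - 0) * g' \<tau>"
    using MVT2[OF \<open>t > 0\<close>, of "\<lambda>s. F (x + s *\<^sub>R e)" g'] by blast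
  have dg': "(g' has_real_derivative e \<bullet> (hess F (x + s *\<^sub>R e) *v e)) (at s)" for s
    unfolding g'_def[abs_def] by (rule has_real_derivative_along_line_grad[OF F(2)])
  have "g' 0 \<le> g' \<tau>"
  proof (rule DERIV_nonneg_imp_increasing_open[of 0 \<tau> g'])
    show "continuous_on {0..\<tau>} g'"
      by (rule DERIV_continuous_on) (rule has_field_derivative_at_within[OF dg'])
  next
    fix s assume "0 < s" "s < \<tau>"
    then have "0 < s" "s < t" using \<tau>(2) by simp_all
    then show "\<exists>y. (g' has_real_derivative y) (at s) \<and> 0 \<le> y"
      using dg'[of s] convex[of s] by blast
  qed (use \<tau> in simp)
  then show ?thesis using \<tau> \<open>t > 0\<close> by (simp add: g'_def mult_left_mono)
qed

lemma increment_le_of_grad_bound: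
  fixes v :: "pt \<Rightarrow> real"
  assumes v: "\<And>y. v differentiable (at y)" and "t > 0" "norm e = 1"
    and L: "\<And>s. 0 < s \<Longrightarrow> s < t \<Longrightarrow> norm (grad v (x + s *\<^sub>R e)) \<le> L"
  shows "v (x + t *\<^sub>R e) - v x \<le> t * L"
proof -
  define h' where "h' s = e \<bullet> grad v (x + s *\<^sub>R e)" for s
  have "((\<lambda>s. v (x + s *\<^sub>R e)) has_real_derivative h' s) (at s)" for s
    unfolding h'_def by (rule has_real_derivative_along_line[OF v])
  then obtain \<tau> where \<tau>: "0 < \<tau>" "\<tau> < t" "v (x + t *\<^sub>R e) - v (x + 0 *\<^sub>R e) = (t - 0) * h' \<tau>"
    using MVT2[OF \<open>t > 0\<close>, of "\<lambda>s. v (x + s *\<^sub>R e)" h'] by blast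
  have "h' \<tau> \<le> norm e * norm (grad v (x + \<tau> *\<^sub>R e))"
    unfolding h'_def by (rule norm_cauchy_schwarz)
  also have "\<dots> \<le> L" using L[OF \<tau>(1,2)] \<open>norm e = 1\<close> by simp
  finally show ?thesis using \<tau> \<open>t > 0\<close> by (simp add: mult_left_mono)
qed

text \<open>Along the ray from \<open>x\<close> in the direction of \<open>grad F x\<close> to the boundary, convexity makes \<open>F\<close>
  grow at least at rate \<open>|grad F x|\<close>, while \<open>v\<close> grows at most at rate \<open>L\<close>.\<close>
lemma norm_grad_le_of_barrier:
  fixes F v :: "pt \<Rightarrow> real"
  assumes "open S" "bounded S" "x \<in> S"
    and F: "\<And>y. F differentiable (at y)" "\<And>j y. pd j F differentiable (at y)"
    and convex: "\<And>y \<xi>. y \<in> S \<Longrightarrow> \<xi> \<bullet> (hess F y *v \<xi>) \<ge> 0"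
    and v: "\<And>y. v differentiable (at y)" and L: "\<And>y. y \<in> S \<Longrightarrow> norm (grad v y) \<le> L"
    and inside: "v x \<le> F x" and boundary: "\<And>y. y \<in> frontier S \<Longrightarrow> F y \<le> v y"
  shows "norm (grad F x) \<le> L"
proof (cases "grad F x = 0")
  case True
  then show ?thesis using order_trans[OF norm_ge_zero L[OF assms(3)]] by simp
next
  case False
  define e where "e = grad F x /\<^sub>R norm (grad F x)"
  have e: "e \<noteq> 0" "norm e = 1" using False by (simp_all add: e_def)
  obtain t where t: "t > 0" "x + t *\<^sub>R e \<in> frontier S" "\<And>s. 0 \<le> s \<Longrightarrow> s < t \<Longrightarrow> x + s *\<^sub>R e \<in> S"
    using ray_exits_through_frontier[OF assms(1-3) e(1)] by blast
  have "e \<bullet> grad F x = norm (grad F x)"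
    using False by (simp add: e_def power2_norm_eq_inner[symmetric] power2_eq_square)
  then have "t * norm (grad F x) \<le> F (x + t *\<^sub>R e) - F x"
    using directional_derivative_increasing_bound[OF F t(1), of e x] convex t(3) by simp
  also have "\<dots> \<le> v (x + t *\<^sub>R e) - v x" using inside boundary[OF t(2)] by simp
  also have "\<dots> \<le> t * L"
    using increment_le_of_grad_bound[OF v t(1) e(2)] L t(3) by simp
  finally show ?thesis using t(1) by simp
qed

section \<open>Compactness bounds and the barrier\<close>

definition sqnorm :: "pt \<Rightarrow> real" where
  "sqnorm y = y$1 * y$1 + y$2 * y$2"

lemma sqnorm_eq: "sqnorm y = (norm y)^2"
  using norm_pow_2_eq[of y] by (simp add: sqnorm_def power2_eq_square)

lemma continuous_on_sqnorm: "continuous_on S sqnorm"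
  unfolding sqnorm_def[abs_def] by (intro continuous_intros)

lemma twice_differentiable_on_sqnorm: "twice_differentiable_on S sqnorm"
proof -
  have "twice_differentiable_on UNIV sqnorm"
    unfolding sqnorm_def[abs_def]
    by (intro twice_differentiable_on_add twice_differentiable_on_mult
        twice_differentiable_on_component open_UNIV)
  then show ?thesis by (rule twice_differentiable_on_subset) simp
qed

lemma pd_pd_sqnorm: "pd i (pd j sqnorm) y = (if i = j then 2 else 0)"
proof -
  have d: "(\<lambda>y::pt. y$k) differentiable (at y)" for k y
    using twice_differentiable_onD(1)[OF twice_differentiable_on_component] by blast
  have "pd j sqnorm y = 2 * y$j" for y
    using exhaust_2[of j] by (auto simp: sqnorm_def[abs_def] pd_add pd_mult d pd_component)
  then have "pd j sqnorm = (\<lambda>y. 2 * y$j)" by blast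
  then show ?thesis using d by (simp add: pd_scale pd_component)
qed

lemma compact_continuous_bound:
  fixes g :: "'a::topological_space \<Rightarrow> real"
  assumes "compact K" "continuous_on K g"
  obtains B where "B > 0" "\<And>y. y \<in> K \<Longrightarrow> \<bar>g y\<bar> \<le> B"
  using compact_imp_bounded[OF compact_continuous_image[OF assms(2,1)]]
  unfolding bounded_pos by auto

lemma compact_continuous_pos_lower_bound:
  fixes g :: "'a::topological_space \<Rightarrow> real"
  assumes "compact K" "continuous_on K g" "\<And>y. y \<in> K \<Longrightarrow> g y > 0"
  obtains m where "m > 0" "\<And>y. y \<in> K \<Longrightarrow> m \<le> g y"
proof (cases "K = {}")
  case True
  then show ?thesis using that[of 1] by simp
next
  case False
  obtain z where "z \<in> K" "\<And>y. y \<in> K \<Longrightarrow> g z \<le> g y"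
    using continuous_attains_inf[OF assms(1) False assms(2)] by blast
  then show ?thesis using that assms(3) by blast
qed

lemma hess_form_abs_le:
  "\<bar>\<xi> \<bullet> (hess f z *v \<xi>)\<bar> \<le> (\<Sum>i\<in>UNIV. \<Sum>j\<in>UNIV. \<bar>pd i (pd j f) z\<bar>) * (norm \<xi>)^2"
proof -
  have bound: "\<bar>\<xi>$i * \<xi>$j * pd i (pd j f) z\<bar> \<le> \<bar>pd i (pd j f) z\<bar> * (norm \<xi>)^2" for i j
  proof -
    have "\<bar>\<xi>$i\<bar> * \<bar>\<xi>$j\<bar> \<le> (norm \<xi>)^2"
      unfolding power2_eq_square by (intro mult_mono component_le_norm_cart) auto
    then have "\<bar>pd i (pd j f) z\<bar> * (\<bar>\<xi>$i\<bar> * \<bar>\<xi>$j\<bar>) \<le> \<bar>pd i (pd j f) z\<bar> * (norm \<xi>)^2"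
      by (rule mult_left_mono) simp
    then show ?thesis by (simp add: abs_mult algebra_simps)
  qed
  have "\<bar>\<xi> \<bullet> (hess f z *v \<xi>)\<bar> \<le> (\<Sum>i\<in>UNIV. \<bar>\<Sum>j\<in>UNIV. \<xi>$i * \<xi>$j * pd i (pd j f) z\<bar>)"
    unfolding hess_form_expand by (rule sum_abs)
  also have "\<dots> \<le> (\<Sum>i\<in>UNIV. \<Sum>j\<in>UNIV. \<bar>\<xi>$i * \<xi>$j * pd i (pd j f) z\<bar>)"
    by (intro sum_mono sum_abs)
  also have "\<dots> \<le> (\<Sum>i\<in>UNIV. \<Sum>j\<in>UNIV. \<bar>pd i (pd j f) z\<bar> * (norm \<xi>)^2)"
    by (intro sum_mono bound)
  finally show ?thesis by (simp add: sum_distrib_right)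
qed

text \<open>The barrier is \<open>\<phi> + K \<rho>\<close> with \<open>\<rho>\<close> the defining function of \<open>\<Omega>\<close>: \<open>\<rho> = 0\<close> on \<open>\<partial>\<Omega>\<close>,
  and \<open>K D\<^sup>2\<rho>\<close> outweighs \<open>D\<^sup>2\<phi>\<close> for large \<open>K\<close>.\<close>
lemma convex_barrier_exists:
  assumes "open \<Omega>" "bounded \<Omega>" "smooth_unif_convex_domain \<Omega>" "smooth_upto \<Omega> \<phi>" "s \<ge> 0"
  obtains v L where "twice_differentiable_on UNIV v"
    "\<And>z \<xi>. z \<in> \<Omega> \<Longrightarrow> s * (norm \<xi>)^2 \<le> \<xi> \<bullet> (hess v z *v \<xi>)"
    "\<And>y. y \<in> frontier \<Omega> \<Longrightarrow> v y = \<phi> y" "\<And>y. y \<in> closure \<Omega> \<Longrightarrow> norm (grad v y) \<le> L"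
proof -
  obtain \<rho> where \<rho>: "smooth_on UNIV \<rho>" "\<Omega> = {x. \<rho> x < 0}"
    and "unif_pos_def_on (closure \<Omega>) (hess \<rho>)"
    using assms(3) unfolding smooth_unif_convex_domain_def by blast
  then obtain c where c: "c > 0" "\<And>x \<xi>. x \<in> closure \<Omega> \<Longrightarrow> c * (norm \<xi>)^2 \<le> \<xi> \<bullet> (hess \<rho> x *v \<xi>)"
    unfolding unif_pos_def_on_def by blast
  obtain \<Phi> where \<Phi>: "smooth_on UNIV \<Phi>" "\<And>x. x \<in> closure \<Omega> \<Longrightarrow> \<Phi> x = \<phi> x"
    using assms(4) unfolding smooth_upto_def by blast
  have compact: "compact (closure \<Omega>)" using assms(2) by simp
  have "continuous_on S (pd i (pd j \<Phi>))" for S i j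
    using smooth_on_continuous_on[OF \<Phi>(1), of S "[i, j]"] by simp
  then have "continuous_on (closure \<Omega>) (\<lambda>y. \<Sum>i\<in>UNIV. \<Sum>j\<in>UNIV. \<bar>pd i (pd j \<Phi>) y\<bar>)"
    by (intro continuous_intros)
  then obtain M where "\<And>y. y \<in> closure \<Omega> \<Longrightarrow> \<bar>\<Sum>i\<in>UNIV. \<Sum>j\<in>UNIV. \<bar>pd i (pd j \<Phi>) y\<bar>\<bar> \<le> M"
    using compact_continuous_bound[OF compact] by blast
  then have M: "\<And>y. y \<in> closure \<Omega> \<Longrightarrow> (\<Sum>i\<in>UNIV. \<Sum>j\<in>UNIV. \<bar>pd i (pd j \<Phi>) y\<bar>) \<le> M"
    by (meson abs_le_D1)
  define K where "K = (M + s) / c"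
  define v where "v y = \<Phi> y + K * \<rho> y" for y
  have \<Phi>2: "twice_differentiable_on UNIV \<Phi>" and \<rho>2: "twice_differentiable_on UNIV \<rho>"
    using smooth_on_twice_differentiable[of _ UNIV "[]"] \<Phi>(1) \<rho>(1) by simp_all
  have v: "twice_differentiable_on UNIV v"
    unfolding v_def[abs_def]
    by (intro twice_differentiable_on_add twice_differentiable_on_mult
        twice_differentiable_on_const \<Phi>2 \<rho>2 open_UNIV)
  have "s * (norm \<xi>)^2 \<le> \<xi> \<bullet> (hess v z *v \<xi>)" if "z \<in> \<Omega>" for z \<xi>
  proof -
    have z: "z \<in> closure \<Omega>" using that closure_subset by blast
    have "- M * (norm \<xi>)^2 \<le> \<xi> \<bullet> (hess \<Phi> z *v \<xi>)"
      using hess_form_abs_le[of \<xi> \<Phi> z] mult_right_mono[OF M[OF z], of "(norm \<xi>)^2"] by simp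
    moreover have "K * (c * (norm \<xi>)^2) \<le> K * (\<xi> \<bullet> (hess \<rho> z *v \<xi>))"
    proof (rule mult_left_mono[OF c(2)[OF z]])
      have "0 \<le> (\<Sum>i\<in>UNIV. \<Sum>j\<in>UNIV. \<bar>pd i (pd j \<Phi>) z\<bar>)" by (intro sum_nonneg) simp
      then show "0 \<le> K" using M[OF z] assms(5) c(1) by (simp add: K_def)
    qed
    moreover have "K * (c * (norm \<xi>)^2) = M * (norm \<xi>)^2 + s * (norm \<xi>)^2"
      using c(1) by (simp add: K_def field_simps)
    ultimately show ?thesis
      unfolding v_def[abs_def] hess_form_add_scale[OF open_UNIV \<Phi>2 \<rho>2 UNIV_I] by linarith
  qed
  moreover have "v y = \<phi> y" if "y \<in> frontier \<Omega>" for y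
  proof -
    have "y \<in> closure \<Omega>" "y \<notin> \<Omega>"
      using that by (auto simp: frontier_def interior_open[OF assms(1)])
    moreover have "closure \<Omega> \<subseteq> {x. \<rho> x \<le> 0}"
      using smooth_on_continuous_on[OF \<rho>(1), of UNIV "[]"] \<rho>(2)
      by (intro closure_minimal closed_Collect_le) auto
    ultimately show ?thesis using \<rho>(2) \<Phi>(2) by (force simp: v_def)
  qed
  moreover obtain L where "\<And>y. y \<in> closure \<Omega> \<Longrightarrow> norm (grad v y) \<le> L"
  proof -
    have "pd j v = (\<lambda>y. pd j \<Phi> y + K * pd j \<rho> y)" for j
      using twice_differentiable_onD(1)[OF \<Phi>2 UNIV_I] twice_differentiable_onD(1)[OF \<rho>2 UNIV_I]
      by (simp add: fun_eq_iff v_def[abs_def] pd_add pd_scale)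
    moreover have "continuous_on S (pd j \<Phi>)" "continuous_on S (pd j \<rho>)" for S j
      using smooth_on_continuous_on[OF \<Phi>(1), of S "[j]"] smooth_on_continuous_on[OF \<rho>(1), of S "[j]"]
      by simp_all
    ultimately have "continuous_on (closure \<Omega>) (\<lambda>y. \<Sum>j\<in>UNIV. \<bar>pd j v y\<bar>)"
      by (simp only:) (intro continuous_intros)
    then obtain L where "\<And>y. y \<in> closure \<Omega> \<Longrightarrow> \<bar>\<Sum>j\<in>UNIV. \<bar>pd j v y\<bar>\<bar> \<le> L"
      using compact_continuous_bound[OF compact] by blast
    then have "\<And>y. y \<in> closure \<Omega> \<Longrightarrow> (\<Sum>j\<in>UNIV. \<bar>pd j v y\<bar>) \<le> L"
      by (meson abs_le_D1)
    moreover have "norm (grad v y) \<le> (\<Sum>j\<in>UNIV. \<bar>pd j v y\<bar>)" for y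
      using norm_le_l1_cart[of "grad v y"] by (simp add: grad_def)
    ultimately have "\<And>y. y \<in> closure \<Omega> \<Longrightarrow> norm (grad v y) \<le> L" by (meson order_trans)
    then show ?thesis by (rule that)
  qed
  ultimately show ?thesis using that v by blast
qed

section \<open>A priori estimates for a solution\<close>

locale solution =
  fixes \<Omega> :: "pt set" and \<phi> \<psi> u w :: "pt \<Rightarrow> real"
  assumes open_domain: "open \<Omega>" and bounded_domain: "bounded \<Omega>"
    and solves: "is_solution \<Omega> \<phi> \<psi> u w"
begin

lemma w_continuous: "continuous_on (closure \<Omega>) w"
  and w_eq: "x \<in> \<Omega> \<Longrightarrow> w x = 1 / det (hess u x)"
  and u_boundary: "y \<in> frontier \<Omega> \<Longrightarrow> u y = \<phi> y"
  and w_boundary: "y \<in> frontier \<Omega> \<Longrightarrow> w y = \<psi> y"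
  using solves unfolding is_solution_def by auto

definition u_ext :: "pt \<Rightarrow> real" where
  "u_ext = (SOME F. smooth_on UNIV F \<and> (\<forall>x\<in>closure \<Omega>. F x = u x))"

lemma smooth_u_ext: "smooth_on UNIV u_ext"
  and u_ext_eq: "x \<in> closure \<Omega> \<Longrightarrow> u_ext x = u x"
proof -
  have "\<exists>F. smooth_on UNIV F \<and> (\<forall>x\<in>closure \<Omega>. F x = u x)"
    using solves unfolding is_solution_def smooth_upto_def by blast
  then have "smooth_on UNIV u_ext \<and> (\<forall>x\<in>closure \<Omega>. u_ext x = u x)"
    unfolding u_ext_def by (rule someI_ex)
  then show "smooth_on UNIV u_ext" "x \<in> closure \<Omega> \<Longrightarrow> u_ext x = u x" by auto
qed

lemma twice_differentiable_u_ext: "twice_differentiable_on S u_ext"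
  using smooth_on_twice_differentiable[OF smooth_u_ext, of S "[]"] by simp

lemma pd_u_eq: "x \<in> \<Omega> \<Longrightarrow> pd j u x = pd j u_ext x"
  by (rule pd_cong[OF open_domain]) (simp_all add: u_ext_eq closure_subset[THEN subsetD])

lemma pd_pd_u_eq: "x \<in> \<Omega> \<Longrightarrow> pd i (pd j u) x = pd i (pd j u_ext) x"
  by (rule pd_cong[OF open_domain _ pd_u_eq])

lemma hess_u_eq: "x \<in> \<Omega> \<Longrightarrow> hess u x = hess u_ext x"
  by (simp add: hess_def pd_pd_u_eq)

lemma grad_u_eq: "x \<in> \<Omega> \<Longrightarrow> grad u x = grad u_ext x"
  by (simp add: grad_def pd_u_eq)

lemma hess_u_ext_symmetric: "hess u_ext x $ 1 $ 2 = hess u_ext x $ 2 $ 1"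
proof -
  have "continuous_on UNIV (pd i (pd j u_ext))" for i j
    using smooth_on_continuous_on[OF smooth_u_ext, of UNIV "[i, j]"] by simp
  then have "pd 1 (pd 2 u_ext) x = pd 2 (pd 1 u_ext) x"
    by (intro pd_pd_commute twice_differentiable_onD[OF twice_differentiable_u_ext UNIV_I])
  then show ?thesis by (simp add: hess_def)
qed

lemma uniformly_convex_u_ext:
  obtains c where "c > 0" "\<And>x \<xi>. x \<in> \<Omega> \<Longrightarrow> c * (norm \<xi>)^2 \<le> \<xi> \<bullet> (hess u_ext x *v \<xi>)"
proof -
  obtain c where "c > 0" "\<And>x \<xi>. x \<in> \<Omega> \<Longrightarrow> c * (norm \<xi>)^2 \<le> \<xi> \<bullet> (hess u x *v \<xi>)"
    using solves unfolding is_solution_def unif_pos_def_on_def by blast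
  with that show ?thesis by (simp add: hess_u_eq)
qed

lemma convex_u_ext:
  assumes "x \<in> \<Omega>"
  shows "0 \<le> \<xi> \<bullet> (hess u_ext x *v \<xi>)"
proof -
  obtain c where c: "c > 0" "\<And>x \<xi>. x \<in> \<Omega> \<Longrightarrow> c * (norm \<xi>)^2 \<le> \<xi> \<bullet> (hess u_ext x *v \<xi>)"
    using uniformly_convex_u_ext by blast
  have "0 \<le> c * (norm \<xi>)^2" using c(1) by simp
  also have "\<dots> \<le> \<xi> \<bullet> (hess u_ext x *v \<xi>)" by (rule c(2)[OF assms])
  finally show ?thesis .
qed

lemma det_hess_u_ext_pos:
  assumes "x \<in> \<Omega>"
  shows "det (hess u_ext x) > 0"
proof -
  obtain c where c: "c > 0" "\<And>x \<xi>. x \<in> \<Omega> \<Longrightarrow> c * (norm \<xi>)^2 \<le> \<xi> \<bullet> (hess u_ext x *v \<xi>)"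
    using uniformly_convex_u_ext by blast
  have "c^2 \<le> det (hess u_ext x)"
    using det_ge_of_quadratic_form_ge c(1) c(2)[OF assms] by simp
  with c(1) show ?thesis by (smt (verit) zero_less_power)
qed

lemma lap_u_ext_pos:
  assumes "x \<in> \<Omega>"
  shows "lap u_ext x > 0"
proof -
  obtain c where c: "c > 0" "\<And>x \<xi>. x \<in> \<Omega> \<Longrightarrow> c * (norm \<xi>)^2 \<le> \<xi> \<bullet> (hess u_ext x *v \<xi>)"
    using uniformly_convex_u_ext by blast
  with quadratic_form_ge_imp_entries[where H = "hess u_ext x" and s = c] assms show ?thesis
    by (simp add: lap_eq_trace)
qed

definition inv_det :: "pt \<Rightarrow> real" where
  "inv_det y = inverse (det (hess u_ext y))"

lemma twice_differentiable_inv_det: "twice_differentiable_on \<Omega> inv_det"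
proof -
  have pd2: "twice_differentiable_on UNIV (pd i (pd j u_ext))" for i j
    using smooth_on_twice_differentiable[OF smooth_u_ext, of UNIV "[i, j]"] by simp
  have "(\<lambda>y. det (hess u_ext y))
      = (\<lambda>y. pd 1 (pd 1 u_ext) y * pd 2 (pd 2 u_ext) y - pd 1 (pd 2 u_ext) y * pd 2 (pd 1 u_ext) y)"
    by (simp add: fun_eq_iff det_2 hess_def)
  moreover have "twice_differentiable_on UNIV
      (\<lambda>y. pd 1 (pd 1 u_ext) y * pd 2 (pd 2 u_ext) y - pd 1 (pd 2 u_ext) y * pd 2 (pd 1 u_ext) y)"
    by (intro twice_differentiable_on_diff twice_differentiable_on_mult pd2 open_UNIV)
  ultimately have "twice_differentiable_on \<Omega> (\<lambda>y. det (hess u_ext y))"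
    using twice_differentiable_on_subset by auto
  then show ?thesis
    unfolding inv_det_def[abs_def]
    by (rule twice_differentiable_on_inverse[OF open_domain])
      (use det_hess_u_ext_pos in \<open>simp add: less_imp_neq[symmetric]\<close>)
qed

lemma w_eq_inv_det: "x \<in> \<Omega> \<Longrightarrow> w x = inv_det x"
  by (simp add: w_eq inv_det_def hess_u_eq inverse_eq_divide)

lemma pd_pd_w_eq: "x \<in> \<Omega> \<Longrightarrow> pd i (pd j w) x = pd i (pd j inv_det) x"
  by (rule pd_cong[OF open_domain _ pd_cong[OF open_domain _ w_eq_inv_det]])

text \<open>The linearised operator \<open>U\<^sup>i\<^sup>j \<partial>\<^sub>i\<^sub>j\<close> of the equation: \<open>adj2 (D\<^sup>2u)\<close> is the cofactor
  matrix \<open>U = (det D\<^sup>2u) (D\<^sup>2u)\<^sup>-\<^sup>1\<close>.\<close>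
definition lin_op :: "(pt \<Rightarrow> real) \<Rightarrow> pt \<Rightarrow> real" where
  "lin_op f x = (\<Sum>i\<in>UNIV. \<Sum>j\<in>UNIV. adj2 (hess u_ext x) $ i $ j * pd i (pd j f) x)"

definition eq_rhs :: "pt \<Rightarrow> real" where
  "eq_rhs x = - (norm (grad u_ext x))\<^sup>2 * lap u_ext x
              - 2 * (grad u_ext x \<bullet> (hess u_ext x *v grad u_ext x))"

lemma lin_op_inv_det:
  assumes x: "x \<in> \<Omega>"
  shows "lin_op inv_det x = eq_rhs x"
proof -
  have "det (hess u x) *\<^sub>R matrix_inv (hess u x) = adj2 (hess u_ext x)"
    using det_scaleR_matrix_inv_2 det_hess_u_ext_pos[OF x] by (simp add: hess_u_eq[OF x])
  moreover have "(\<Sum>i\<in>UNIV. \<Sum>j\<in>UNIV. grad u x $ i * grad u x $ j * pd i (pd j u) x)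
      = grad u_ext x \<bullet> (hess u_ext x *v grad u_ext x)"
    using x by (simp add: hess_form_expand grad_u_eq pd_pd_u_eq)
  moreover have "lap u x = lap u_ext x"
    using x by (simp add: lap_def pd_pd_u_eq)
  moreover have "(\<Sum>i\<in>UNIV. \<Sum>j\<in>UNIV.
        (det (hess u x) *\<^sub>R matrix_inv (hess u x)) $ i $ j * pd i (pd j w) x)
      = - (norm (grad u x))\<^sup>2 * lap u x
        - 2 * (\<Sum>i\<in>UNIV. \<Sum>j\<in>UNIV. grad u x $ i * grad u x $ j * pd i (pd j u) x)"
    using solves x unfolding is_solution_def Let_def by blast
  ultimately show ?thesis
    using x by (simp add: lin_op_def eq_rhs_def pd_pd_w_eq grad_u_eq)
qed

lemma eq_rhs_nonpos:
  assumes "x \<in> \<Omega>"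
  shows "eq_rhs x \<le> 0"
  using convex_u_ext[OF assms, of "grad u_ext x"]
    mult_nonneg_nonneg[OF zero_le_power2[of "norm (grad u_ext x)"] less_imp_le[OF lap_u_ext_pos[OF assms]]]
  by (simp add: eq_rhs_def)

lemma eq_rhs_lower_bound:
  assumes "x \<in> \<Omega>"
  shows "- 3 * (norm (grad u_ext x))^2 * lap u_ext x \<le> eq_rhs x"
  using quadratic_form_le_norm_trace[OF convex_u_ext[OF assms], of "grad u_ext x"]
  by (simp add: eq_rhs_def lap_eq_trace)

lemma lin_op_nonneg_at_local_min:
  assumes "twice_differentiable_on \<Omega> f" "z \<in> \<Omega>" "\<And>y. y \<in> \<Omega> \<Longrightarrow> f z \<le> f y"
  shows "0 \<le> lin_op f z"
proof -
  have "0 \<le> \<xi> \<bullet> (hess f z *v \<xi>)" for \<xi>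
    by (rule hess_form_nonneg_at_local_min[where f = f, OF open_domain assms(2) _ _ assms(3)])
      (use twice_differentiable_onD[OF assms(1)] assms(2) in auto)
  from trace_adj2_mult_nonneg[OF hess_u_ext_symmetric convex_u_ext[OF assms(2)] this]
  show ?thesis by (simp add: lin_op_def hess_def)
qed

lemma lin_op_nonpos_at_local_max:
  assumes "twice_differentiable_on \<Omega> f" "z \<in> \<Omega>" "\<And>y. y \<in> \<Omega> \<Longrightarrow> f y \<le> f z"
  shows "lin_op f z \<le> 0"
proof -
  have "\<xi> \<bullet> (hess f z *v \<xi>) \<le> 0" for \<xi>
    by (rule hess_form_nonpos_at_local_max[where f = f, OF open_domain assms(2) _ _ assms(3)])
      (use twice_differentiable_onD[OF assms(1)] assms(2) in auto)
  moreover have "\<xi> \<bullet> ((\<chi> i j. - pd i (pd j f) z) *v \<xi>) = - (\<xi> \<bullet> (hess f z *v \<xi>))" for \<xi>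
    by (simp add: hess_def inner_vec_def matrix_vector_mult_def sum_2 algebra_simps)
  ultimately have "0 \<le> \<xi> \<bullet> ((\<chi> i j. - pd i (pd j f) z) *v \<xi>)" for \<xi>
    by (metis neg_0_le_iff_le)
  from trace_adj2_mult_nonneg[OF hess_u_ext_symmetric convex_u_ext[OF assms(2)] this]
  show ?thesis by (simp add: lin_op_def sum_2)
qed

lemma lin_op_add_sqnorm:
  assumes "twice_differentiable_on \<Omega> f" "z \<in> \<Omega>"
  shows "lin_op (\<lambda>y. f y + c * sqnorm y) z = lin_op f z + 2 * c * lap u_ext z"
  unfolding lin_op_def
    pd_pd_add_scale[OF open_domain assms(1) twice_differentiable_on_sqnorm assms(2)]
  by (simp add: pd_pd_sqnorm adj2_def lap_eq_trace sum_2 algebra_simps)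

lemma twice_differentiable_inv_det_add_sqnorm:
  "twice_differentiable_on \<Omega> (\<lambda>y. inv_det y + c * sqnorm y)"
  by (intro twice_differentiable_on_add twice_differentiable_on_mult twice_differentiable_on_const
      twice_differentiable_inv_det twice_differentiable_on_sqnorm open_domain)

text \<open>\<open>w - \<epsilon> |x|\<^sup>2\<close> is a strict supersolution, since the right-hand side is nonpositive.\<close>
lemma w_lower_bound:
  assumes "m > 0" "\<And>y. y \<in> frontier \<Omega> \<Longrightarrow> m \<le> \<psi> y" "x \<in> \<Omega>"
  shows "m / 2 \<le> w x"
proof -
  obtain R where R: "R > 0" "\<And>y. y \<in> closure \<Omega> \<Longrightarrow> \<bar>sqnorm y\<bar> \<le> R"
    using compact_continuous_bound[OF _ continuous_on_sqnorm] bounded_domain compact_closure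
    by blast
  define \<epsilon> where "\<epsilon> = m / (2 * R)"
  have \<epsilon>: "\<epsilon> > 0" "\<epsilon> * R = m / 2" using assms(1) R(1) by (simp_all add: \<epsilon>_def)
  define Z where "Z y = w y + (- \<epsilon>) * sqnorm y" for y
  have "continuous_on (closure \<Omega>) Z"
    unfolding Z_def[abs_def] by (intro continuous_intros w_continuous continuous_on_sqnorm)
  then obtain z where z: "z \<in> frontier \<Omega>" "\<And>y. y \<in> closure \<Omega> \<Longrightarrow> Z z \<le> Z y"
  proof (rule continuous_attains_inf_frontier[OF open_domain bounded_domain _ assms(3)])
    fix z assume z: "z \<in> \<Omega>" and min: "\<And>y. y \<in> \<Omega> \<Longrightarrow> Z z \<le> Z y"
    have "0 \<le> lin_op (\<lambda>y. inv_det y + (- \<epsilon>) * sqnorm y) z"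
      using min z
      by (intro lin_op_nonneg_at_local_min twice_differentiable_inv_det_add_sqnorm)
        (auto simp: Z_def w_eq_inv_det)
    also have "\<dots> = eq_rhs z - 2 * \<epsilon> * lap u_ext z"
      using lin_op_add_sqnorm[OF twice_differentiable_inv_det z, of "- \<epsilon>"] lin_op_inv_det[OF z]
      by simp
    also have "\<dots> < 0"
      using eq_rhs_nonpos[OF z] mult_pos_pos[OF \<epsilon>(1) lap_u_ext_pos[OF z]] by simp
    finally show False by simp
  qed (rule that)
  have "sqnorm z \<le> R" using R(2)[of z] frontier_subset_closure z(1) by (meson abs_le_D1 subsetD)
  then have "\<epsilon> * sqnorm z \<le> \<epsilon> * R" using \<epsilon>(1) by simp
  then have "m - \<epsilon> * R \<le> Z z"
    using assms(2)[OF z(1)] w_boundary[OF z(1)] by (simp add: Z_def)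
  also have "\<dots> \<le> Z x" using z(2) assms(3) closure_subset by blast
  also have "\<dots> \<le> w x" using \<epsilon>(1) by (simp add: Z_def sqnorm_eq)
  finally show ?thesis using \<epsilon>(2) by simp
qed

text \<open>Given a gradient bound \<open>L\<close>, \<open>w + A |x|\<^sup>2\<close> with \<open>2 A > 3 L\<^sup>2\<close> is a strict subsolution.\<close>
lemma w_upper_bound:
  assumes L: "\<And>x. x \<in> \<Omega> \<Longrightarrow> norm (grad u x) \<le> L"
    and M: "\<And>y. y \<in> frontier \<Omega> \<Longrightarrow> \<psi> y \<le> M" and R: "\<And>y. y \<in> closure \<Omega> \<Longrightarrow> sqnorm y \<le> R"
    and "x \<in> \<Omega>"
  shows "w x \<le> M + (2 * L^2 + 1) * R"
proof -
  define A where "A = 2 * L^2 + 1"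
  define Z where "Z y = w y + A * sqnorm y" for y
  have "continuous_on (closure \<Omega>) Z"
    unfolding Z_def[abs_def] by (intro continuous_intros w_continuous continuous_on_sqnorm)
  then obtain z where z: "z \<in> frontier \<Omega>" "\<And>y. y \<in> closure \<Omega> \<Longrightarrow> Z y \<le> Z z"
  proof (rule continuous_attains_sup_frontier[OF open_domain bounded_domain _ \<open>x \<in> \<Omega>\<close>])
    fix z assume z: "z \<in> \<Omega>" and max: "\<And>y. y \<in> \<Omega> \<Longrightarrow> Z y \<le> Z z"
    have "(norm (grad u_ext z))^2 \<le> L^2"
      using L[OF z] by (simp add: grad_u_eq[OF z] power_mono)
    then have "3 * (norm (grad u_ext z))^2 < 2 * A"
      using zero_le_power2[of L] unfolding A_def by (smt (verit))
    then have "3 * (norm (grad u_ext z))^2 * lap u_ext z < 2 * A * lap u_ext z"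
      using lap_u_ext_pos[OF z] by (rule mult_strict_right_mono)
    then have "0 < eq_rhs z + 2 * A * lap u_ext z"
      using eq_rhs_lower_bound[OF z] by simp
    also have "\<dots> = lin_op (\<lambda>y. inv_det y + A * sqnorm y) z"
      using lin_op_add_sqnorm[OF twice_differentiable_inv_det z] lin_op_inv_det[OF z] by simp
    also have "\<dots> \<le> 0"
      using max z
      by (intro lin_op_nonpos_at_local_max twice_differentiable_inv_det_add_sqnorm)
        (auto simp: Z_def w_eq_inv_det)
    finally show False by simp
  qed (rule that)
  have "w x \<le> Z x" by (simp add: Z_def A_def sqnorm_eq)
  also have "\<dots> \<le> Z z" using z(2) \<open>x \<in> \<Omega>\<close> closure_subset by blast
  also have "\<dots> \<le> M + A * R"
    using M[OF z(1)] w_boundary[OF z(1)] R[of z] frontier_subset_closure z(1)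
    by (auto simp: Z_def A_def intro!: add_mono mult_left_mono)
  finally show ?thesis by (simp add: A_def)
qed

lemma det_hess_pos: "x \<in> \<Omega> \<Longrightarrow> det (hess u x) > 0"
  using det_hess_u_ext_pos by (simp add: hess_u_eq)

lemma det_hess_le_of_w_ge:
  assumes "x \<in> \<Omega>" "0 < a" "a \<le> w x"
  shows "det (hess u x) \<le> 1 / a"
  using assms det_hess_pos[OF assms(1)] by (simp add: w_eq field_simps)

lemma det_hess_ge_of_w_le:
  assumes "x \<in> \<Omega>" "w x \<le> b"
  shows "1 / b \<le> det (hess u x)"
  using le_imp_inverse_le[OF assms(2)] det_hess_pos[OF assms(1)]
  by (simp add: w_eq assms(1) inverse_eq_divide)

text \<open>The barrier stays below \<open>u\<close> because \<open>det D\<^sup>2u < s\<^sup>2\<close>, and touches it on the boundary.\<close>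
lemma norm_grad_le_of_convex_barrier:
  assumes v: "twice_differentiable_on UNIV v" and "s \<ge> 0"
    and v_convex: "\<And>z \<xi>. z \<in> \<Omega> \<Longrightarrow> s * (norm \<xi>)^2 \<le> \<xi> \<bullet> (hess v z *v \<xi>)"
    and det_less: "\<And>x. x \<in> \<Omega> \<Longrightarrow> det (hess u x) < s^2"
    and v_boundary: "\<And>y. y \<in> frontier \<Omega> \<Longrightarrow> v y = \<phi> y"
    and L: "\<And>y. y \<in> \<Omega> \<Longrightarrow> norm (grad v y) \<le> L" and x: "x \<in> \<Omega>"
  shows "norm (grad u x) \<le> L"
proof -
  have boundary: "u_ext y = v y" if "y \<in> frontier \<Omega>" for y
    using that frontier_subset_closure u_ext_eq u_boundary v_boundary by fastforce
  have "v x \<le> u_ext x"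
    by (rule le_of_hess_det_comparison[OF open_domain bounded_domain _
          twice_differentiable_u_ext v \<open>s \<ge> 0\<close> v_convex])
      (use x closure_subset det_less hess_u_eq boundary in auto)
  then have "norm (grad u_ext x) \<le> L"
    by (intro norm_grad_le_of_barrier[OF open_domain bounded_domain x _ _ convex_u_ext _ L])
      (use twice_differentiable_onD[OF twice_differentiable_u_ext UNIV_I]
        twice_differentiable_onD[OF v UNIV_I] boundary in auto)
  then show ?thesis by (simp add: grad_u_eq[OF x])
qed

lemma a_priori_estimates:
  assumes m: "m > 0" "\<And>y. y \<in> frontier \<Omega> \<Longrightarrow> m \<le> \<psi> y"
    and M: "\<And>y. y \<in> frontier \<Omega> \<Longrightarrow> \<psi> y \<le> M" and R: "\<And>y. y \<in> closure \<Omega> \<Longrightarrow> sqnorm y \<le> R"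
    and s: "s \<ge> 0" "2 / m < s^2"
    and v: "twice_differentiable_on UNIV v"
      "\<And>z \<xi>. z \<in> \<Omega> \<Longrightarrow> s * (norm \<xi>)^2 \<le> \<xi> \<bullet> (hess v z *v \<xi>)"
      "\<And>y. y \<in> frontier \<Omega> \<Longrightarrow> v y = \<phi> y" "\<And>y. y \<in> \<Omega> \<Longrightarrow> norm (grad v y) \<le> L"
    and C: "C = 1 + \<bar>L\<bar> + 2 / m + \<bar>M + (2 * L^2 + 1) * R\<bar>"
  shows "(\<forall>x\<in>\<Omega>. norm (grad u x) \<le> C) \<and> (\<forall>x\<in>\<Omega>. 1 / C \<le> det (hess u x) \<and> det (hess u x) \<le> C)"
proof -
  have det_le: "det (hess u x) \<le> 2 / m" if "x \<in> \<Omega>" for x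
    using det_hess_le_of_w_ge[OF that _ w_lower_bound[OF m that]] m(1) by simp
  have grad_le: "norm (grad u x) \<le> L" if "x \<in> \<Omega>" for x
  proof (rule norm_grad_le_of_convex_barrier[OF v(1) s(1) v(2) _ v(3) v(4) that])
    show "det (hess u y) < s^2" if "y \<in> \<Omega>" for y using det_le[OF that] s(2) by simp
  qed
  have "w x \<le> C" if "x \<in> \<Omega>" for x
    using w_upper_bound[OF grad_le M R that] abs_ge_self[of "M + (2 * L^2 + 1) * R"]
      abs_ge_zero[of L] m(1) unfolding C by (smt (verit) divide_pos_pos)
  moreover have "L \<le> C" "2 / m \<le> C"
    using abs_ge_self[of L] abs_ge_zero[of L] abs_ge_zero[of "M + (2 * L^2 + 1) * R"] m(1)
    unfolding C by (smt (verit) divide_pos_pos)+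
  ultimately show ?thesis
    using grad_le det_le det_hess_ge_of_w_le by (meson order_trans)
qed

end

theorem mainTheorem3:
  fixes \<Omega> :: "(real^2) set" and \<phi> \<psi> :: "real^2 \<Rightarrow> real"
  assumes "open \<Omega>" and "bounded \<Omega>" and "smooth_unif_convex_domain \<Omega>"
    and "smooth_upto \<Omega> \<phi>" and "smooth_upto \<Omega> \<psi>"
    and "\<forall>x\<in>frontier \<Omega>. \<psi> x > 0"
  shows "\<exists>C>1. \<forall>u w. is_solution \<Omega> \<phi> \<psi> u w \<longrightarrow>
           (\<forall>x\<in>\<Omega>. norm (grad u x) \<le> C) \<and>
           (\<forall>x\<in>\<Omega>. 1 / C \<le> det (hess u x) \<and> det (hess u x) \<le> C)"
proof -
  have frontier: "compact (frontier \<Omega>)" "continuous_on (frontier \<Omega>) \<psi>"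
    using assms(2) continuous_on_subset[OF smooth_upto_continuous_on[OF assms(5)]]
      frontier_subset_closure by auto
  obtain m where m: "m > 0" "\<And>y. y \<in> frontier \<Omega> \<Longrightarrow> m \<le> \<psi> y"
    using compact_continuous_pos_lower_bound[OF frontier] assms(6) by blast
  obtain M where M: "\<And>y. y \<in> frontier \<Omega> \<Longrightarrow> \<bar>\<psi> y\<bar> \<le> M"
    using compact_continuous_bound[OF frontier] by blast
  obtain R where R: "\<And>y. y \<in> closure \<Omega> \<Longrightarrow> \<bar>sqnorm y\<bar> \<le> R"
    using compact_continuous_bound[OF _ continuous_on_sqnorm] assms(2) compact_closure by blast
  define s where "s = 2 / m + 1"
  have s: "s \<ge> 0" "2 / m < s^2"
  proof -
    have "1 \<le> s" "2 / m < s" using m(1) by (simp_all add: s_def)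
    moreover have "s * 1 \<le> s * s" using \<open>1 \<le> s\<close> by (intro mult_left_mono) auto
    ultimately show "s \<ge> 0" "2 / m < s^2" unfolding power2_eq_square by linarith+
  qed
  obtain v L where v: "twice_differentiable_on UNIV v"
    "\<And>z \<xi>. z \<in> \<Omega> \<Longrightarrow> s * (norm \<xi>)^2 \<le> \<xi> \<bullet> (hess v z *v \<xi>)"
    "\<And>y. y \<in> frontier \<Omega> \<Longrightarrow> v y = \<phi> y" "\<And>y. y \<in> closure \<Omega> \<Longrightarrow> norm (grad v y) \<le> L"
    using convex_barrier_exists[OF assms(1-4) s(1)] by blast
  have v_grad: "\<And>y. y \<in> \<Omega> \<Longrightarrow> norm (grad v y) \<le> L" using v(4) closure_subset by blast
  define C where "C = 1 + \<bar>L\<bar> + 2 / m + \<bar>M + (2 * L^2 + 1) * R\<bar>"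
  have "C > 1"
    using m(1) abs_ge_zero[of L] abs_ge_zero[of "M + (2 * L^2 + 1) * R"] unfolding C_def
    by (smt (verit) divide_pos_pos)
  moreover have "(\<forall>x\<in>\<Omega>. norm (grad u x) \<le> C) \<and> (\<forall>x\<in>\<Omega>. 1 / C \<le> det (hess u x) \<and> det (hess u x) \<le> C)"
    if "is_solution \<Omega> \<phi> \<psi> u w" for u w
    by (rule solution.a_priori_estimates[OF solution.intro[OF assms(1,2) that] m abs_le_D1[OF M]
          abs_le_D1[OF R] s v(1-3) v_grad C_def])
  ultimately show ?thesis by blast
qed

end
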